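(* Let $h$ be a hospital and $k_h=\lceil B_h/\underline{w}_h\rceil$. Define $\mathrm{Ch}_h:2^{X_h}\to2^{X_h}$ by: given $X'\subseteq X_h$, sort $X'$ in non-increasing order of utility per unit wage $f_h(x)/x_W$ (ties broken by a fixed order) and return the first $\min\{k_h,|X'|\}$ contracts. Then $\mathrm{Ch}_h$ satisfies SUB, IRC, LAD and COM.
   Context: Hospital $h$ has a finite set $X_h$ of contracts $x=(d,h,w)$ with wages $x_W=w$, $0<x_W\le B_h$, where $B_h>0$ is its budget; distinct contracts in $X_h$ may involve the same doctor. Its utility is additive: $f_h(x)>0$ and $f_h(Y)=\sum_{x\in Y}f_h(x)$. $w_h(Y)=\sum_{x\in Y}x_W$ for $Y\subseteq X_h$, $\underline{w}_h=\min_{x\in X_h}x_W$. For a map $\mathrm{Ch}_h:2^{X_h}\to2^{X_h}$ with $\mathrm{Ch}_h(Y)\subseteq Y$: SUB means for all $Y''\subseteq Y'\subseteq X_h$, $Y''\setminus\mathrm{Ch}_h(Y'')\subseteq Y'\setminus\mathrm{Ch}_h(Y')$; IRC means for $Y'\subseteq X_h$, $Y''\subseteq X_h\setminus Y'$, if $\mathrm{Ch}_h(Y'\cup Y'')\subseteq Y'$ then $\mathrm{Ch}_h(Y')=\mathrm{Ch}_h(Y'\cup Y'')$; LAD means for all $Y''\subseteq Y'\subseteq X_h$, $|\mathrm{Ch}_h(Y'')|\le|\mathrm{Ch}_h(Y')|$; COM means for all $Y''\subseteq Y'\subseteq X_h$ with $w_h(Y'')\le\max\{B_h,w_h(\mathrm{Ch}_h(Y'))\}$,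 $f_h(\mathrm{Ch}_h(Y'))\ge f_h(Y'')$. *)

theory Defs
  imports Complex_Main
begin

text \<open>Contracts of hospital h are elements of an abstract type 'c; X is the finite
  set X_h, wage x gives x_W, f gives the utility of a single contract, B is the budget.\<close>

definition SUB :: "'c set \<Rightarrow> ('c set \<Rightarrow> 'c set) \<Rightarrow> bool" where
  "SUB X Ch \<longleftrightarrow> (\<forall>Y' Y''. Y'' \<subseteq> Y' \<and> Y' \<subseteq> X \<longrightarrow> Y'' - Ch Y'' \<subseteq> Y' - Ch Y')"

definition IRC :: "'c set \<Rightarrow> ('c set \<Rightarrow> 'c set) \<Rightarrow> bool" where
  "IRC X Ch \<longleftrightarrow> (\<forall>Y' Y''. Y' \<subseteq> X \<and> Y'' \<subseteq> X - Y' \<and> Ch (Y' \<union> Y'') \<subseteq> Y'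
      \<longrightarrow> Ch Y' = Ch (Y' \<union> Y''))"

definition LAD :: "'c set \<Rightarrow> ('c set \<Rightarrow> 'c set) \<Rightarrow> bool" where
  "LAD X Ch \<longleftrightarrow> (\<forall>Y' Y''. Y'' \<subseteq> Y' \<and> Y' \<subseteq> X \<longrightarrow> card (Ch Y'') \<le> card (Ch Y'))"

definition COM :: "'c set \<Rightarrow> ('c \<Rightarrow> real) \<Rightarrow> ('c \<Rightarrow> real) \<Rightarrow> real \<Rightarrow> ('c set \<Rightarrow> 'c set) \<Rightarrow> bool" where
  "COM X wage f B Ch \<longleftrightarrow> (\<forall>Y' Y''. Y'' \<subseteq> Y' \<and> Y' \<subseteq> X \<and>
      sum wage Y'' \<le> max B (sum wage (Ch Y')) \<longrightarrow> sum f (Ch Y') \<ge> sum f Y'')"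

definition kh :: "'c set \<Rightarrow> ('c \<Rightarrow> real) \<Rightarrow> real \<Rightarrow> nat" where
  "kh X wage B = nat \<lceil>B / Min (wage ` X)\<rceil>"

definition before :: "('c \<Rightarrow> real) \<Rightarrow> ('c \<Rightarrow> real) \<Rightarrow> ('c \<Rightarrow> 'c \<Rightarrow> bool) \<Rightarrow> 'c \<Rightarrow> 'c \<Rightarrow> bool" where
  "before wage f tb x y \<longleftrightarrow> f x / wage x > f y / wage y \<or> (f x / wage x = f y / wage y \<and> tb x y)"

text \<open>Greedy choice: after sorting X' by the order above, the first min{k, |X'|} contracts are
  exactly those with fewer than k predecessors in X'.\<close>
definition greedy_ch :: "nat \<Rightarrow> ('c \<Rightarrow> real) \<Rightarrow> ('c \<Rightarrow> real) \<Rightarrow> ('c \<Rightarrow> 'c \<Rightarrow> bool) \<Rightarrow> 'c set \<Rightarrow> 'c set" where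
  "greedy_ch k wage f tb X' = {x \<in> X'. card {y \<in> X'. before wage f tb y x} < k}"

end

theory Submission
  imports Defs
begin

text \<open>Every property except COM holds for the rule ``take the first k elements of a
  strict total order'', whatever the order: an element's rank can only grow when the menu
  grows, and a full choice set consists of elements preceding every rejected one.
  COM is a fractional-knapsack exchange argument: once k contracts are chosen their wages
  exceed the budget, and every chosen contract has a utility-per-wage ratio at least the
  largest ratio r among the rejected ones, so utility is at least r times wage on the
  chosen side and at most r times wage on the rejected side.\<close>

definition strict_total_on :: "'a set \<Rightarrow> ('a \<Rightarrow> 'a \<Rightarrow> bool) \<Rightarrow> bool" where
  "strict_total_on X R \<longleftrightarrow> (\<forall>x\<in>X. \<not> R x x)
     \<and> (\<forall>x\<in>X. \<forall>y\<in>X. \<forall>z\<in>X. R x y \<longrightarrow> R y z \<longrightarrow> R x z)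
     \<and> (\<forall>x\<in>X. \<forall>y\<in>X. x \<noteq> y \<longrightarrow> R x y \<or> R y x)"

definition rank :: "('a \<Rightarrow> 'a \<Rightarrow> bool) \<Rightarrow> 'a set \<Rightarrow> 'a \<Rightarrow> nat" where
  "rank R Y x = card {y\<in>Y. R y x}"

definition top_k :: "nat \<Rightarrow> ('a \<Rightarrow> 'a \<Rightarrow> bool) \<Rightarrow> 'a set \<Rightarrow> 'a set" where
  "top_k k R Y = {x\<in>Y. rank R Y x < k}"

lemma greedy_ch_eq_top_k: "greedy_ch k wage f tb = top_k k (before wage f tb)"
  by (simp add: fun_eq_iff greedy_ch_def top_k_def rank_def)

lemma strict_total_on_before:
  assumes "\<And>x. x \<in> X \<Longrightarrow> \<not> tb x x"
    and "\<And>x y z. x \<in> X \<Longrightarrow> y \<in> X \<Longrightarrow> z \<in> X \<Longrightarrow> tb x y \<Longrightarrow> tb y z \<Longrightarrow> tb x z"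
    and "\<And>x y. x \<in> X \<Longrightarrow> y \<in> X \<Longrightarrow> x \<noteq> y \<Longrightarrow> tb x y \<or> tb y x"
  shows "strict_total_on X (before wage f tb)"
  using assms unfolding strict_total_on_def before_def by (smt (verit))

lemma top_k_subset: "top_k k R Y \<subseteq> Y"
  by (auto simp: top_k_def)

lemma rank_mono: "finite Z \<Longrightarrow> Y \<subseteq> Z \<Longrightarrow> rank R Y x \<le> rank R Z x"
  unfolding rank_def by (intro card_mono) auto

lemma rank_less_card:
  assumes "strict_total_on X R" "finite Y" "Y \<subseteq> X" "x \<in> Y"
  shows "rank R Y x < card Y"
proof -
  have "rank R Y x \<le> card (Y - {x})"
    unfolding rank_def using assms by (intro card_mono) (auto simp: strict_total_on_def)
  also have "\<dots> < card Y"
    using assms by (intro card_Diff1_less)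
  finally show ?thesis .
qed

lemma rank_strict_mono:
  assumes "strict_total_on X R" "finite Y" "Y \<subseteq> X" "x \<in> Y" "y \<in> Y" "R x y"
  shows "rank R Y x < rank R Y y"
  unfolding rank_def
proof (rule psubset_card_mono)
  show "finite {z\<in>Y. R z y}" using assms by auto
  have "{z\<in>Y. R z x} \<subseteq> {z\<in>Y. R z y}" "x \<in> {z\<in>Y. R z y}" "x \<notin> {z\<in>Y. R z x}"
    using assms unfolding strict_total_on_def by blast+
  then show "{z\<in>Y. R z x} \<subset> {z\<in>Y. R z y}" by blast
qed

lemma rank_bij_betw:
  assumes "strict_total_on X R" "finite Y" "Y \<subseteq> X"
  shows "bij_betw (rank R Y) Y {..<card Y}"
proof -
  have inj: "inj_on (rank R Y) Y"
  proof (rule inj_onI, rule ccontr)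
    fix x y assume xy: "x \<in> Y" "y \<in> Y" "rank R Y x = rank R Y y" "x \<noteq> y"
    then have "R x y \<or> R y x" using assms unfolding strict_total_on_def by blast
    then show False using rank_strict_mono[OF assms] xy by fastforce
  qed
  moreover have "rank R Y ` Y \<subseteq> {..<card Y}"
    using rank_less_card[OF assms] by auto
  ultimately have "rank R Y ` Y = {..<card Y}"
    by (intro card_subset_eq) (auto simp: card_image)
  with inj show ?thesis by (simp add: bij_betw_def)
qed

lemma card_top_k:
  assumes "strict_total_on X R" "finite Y" "Y \<subseteq> X"
  shows "card (top_k k R Y) = min k (card Y)"
proof -
  note bij = rank_bij_betw[OF assms]
  have "card (top_k k R Y) = card (rank R Y ` top_k k R Y)"
    using bij by (intro card_image[symmetric] inj_on_subset[OF bij_betw_imp_inj_on top_k_subset])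
  also have "rank R Y ` top_k k R Y = rank R Y ` Y \<inter> {..<k}"
    by (auto simp: top_k_def)
  also have "\<dots> = {..<min k (card Y)}"
    using bij by (auto simp: bij_betw_def)
  finally show ?thesis by simp
qed

lemma card_top_k_eq_if_rejects:
  assumes "strict_total_on X R" "finite Y" "Y \<subseteq> X" "top_k k R Y \<noteq> Y"
  shows "card (top_k k R Y) = k"
proof -
  have "card (top_k k R Y) < card Y"
    using assms(2,4) top_k_subset[of k R Y] by (intro psubset_card_mono) auto
  then show ?thesis using card_top_k[OF assms(1-3)] by simp
qed

lemma top_k_before_rejected:
  assumes "strict_total_on X R" "finite Y" "Y \<subseteq> X"
    and "c \<in> top_k k R Y" "y \<in> Y - top_k k R Y"
  shows "R c y"
proof -
  have "c \<noteq> y" "c \<in> Y" using assms by (auto simp: top_k_def)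
  moreover have "\<not> R y c"
    using rank_strict_mono[OF assms(1-3)] assms by (fastforce simp: top_k_def)
  ultimately show ?thesis using assms unfolding strict_total_on_def by blast
qed

lemma top_k_SUB:
  assumes "finite X"
  shows "SUB X (top_k k R)"
  unfolding SUB_def
proof (intro allI impI subsetI)
  fix Y' Y'' x assume Y: "Y'' \<subseteq> Y' \<and> Y' \<subseteq> X" and x: "x \<in> Y'' - top_k k R Y''"
  have "rank R Y'' x \<le> rank R Y' x"
    using Y assms by (intro rank_mono) (auto intro: finite_subset)
  with x Y show "x \<in> Y' - top_k k R Y'" by (auto simp: top_k_def)
qed

lemma top_k_LAD:
  assumes "finite X" "strict_total_on X R"
  shows "LAD X (top_k k R)"
  unfolding LAD_def
proof (intro allI impI)
  fix Y' Y'' :: "'a set" assume "Y'' \<subseteq> Y' \<and> Y' \<subseteq> X"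
  then have Y: "Y'' \<subseteq> X" "Y' \<subseteq> X" "finite Y'" "card Y'' \<le> card Y'"
    using assms by (auto intro: finite_subset card_mono)
  then show "card (top_k k R Y'') \<le> card (top_k k R Y')"
    using card_top_k[OF assms(2)] finite_subset[OF Y(1) assms(1)] by simp
qed

text \<open>If the choice from Z lies inside Y, it is full unless it is all of Z; in the full
  case its k elements all precede any element of Y rejected from Z, and they stay
  predecessors in Y.\<close>

lemma top_k_eq_if_choice_within:
  assumes R: "strict_total_on X R" and Z: "finite Z" "Z \<subseteq> X"
    and "Y \<subseteq> Z" and within: "top_k k R Z \<subseteq> Y"
  shows "top_k k R Y = top_k k R Z"
proof
  show "top_k k R Z \<subseteq> top_k k R Y"
    using within rank_mono[OF Z(1) \<open>Y \<subseteq> Z\<close>, of R] unfolding top_k_def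
    by (blast intro: le_less_trans)
next
  show "top_k k R Y \<subseteq> top_k k R Z"
  proof (rule subsetI, rule ccontr)
    fix x assume x: "x \<in> top_k k R Y" and rejected: "x \<notin> top_k k R Z"
    then have "x \<in> Z - top_k k R Z" using \<open>Y \<subseteq> Z\<close> by (auto simp: top_k_def)
    then have "top_k k R Z \<subseteq> {y\<in>Y. R y x}"
      using within top_k_before_rejected[OF R Z] by blast
    then have "card (top_k k R Z) \<le> rank R Y x"
      unfolding rank_def using Z \<open>Y \<subseteq> Z\<close> by (intro card_mono) (auto intro: finite_subset)
    moreover have "card (top_k k R Z) = k"
      using card_top_k_eq_if_rejects[OF R Z] \<open>x \<in> Z - top_k k R Z\<close> by blast
    ultimately show False using x by (simp add: top_k_def)
  qed
qed

lemma top_k_IRC: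
  assumes "finite X" "strict_total_on X R"
  shows "IRC X (top_k k R)"
  unfolding IRC_def
proof (intro allI impI)
  fix Y' Y'' assume "Y' \<subseteq> X \<and> Y'' \<subseteq> X - Y' \<and> top_k k R (Y' \<union> Y'') \<subseteq> Y'"
  then show "top_k k R Y' = top_k k R (Y' \<union> Y'')"
    using assms by (intro top_k_eq_if_choice_within[of X]) (auto intro: finite_subset)
qed

lemma sum_le_sum_if_threshold:
  fixes w f :: "'a \<Rightarrow> real"
  assumes "finite Z" "finite C" "0 \<le> r"
    and below: "\<And>y. y \<in> Z - C \<Longrightarrow> f y \<le> r * w y"
    and above: "\<And>c. c \<in> C - Z \<Longrightarrow> r * w c \<le> f c"
    and wages: "sum w Z \<le> sum w C"
  shows "sum f Z \<le> sum f C"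
proof -
  have split: "sum g Z = sum g (Z \<inter> C) + sum g (Z - C)"
    "sum g C = sum g (Z \<inter> C) + sum g (C - Z)" for g :: "'a \<Rightarrow> real"
    using assms(1,2) by (metis sum.Int_Diff, metis inf_commute sum.Int_Diff)
  have "sum f (Z - C) \<le> (\<Sum>y\<in>Z - C. r * w y)"
    using below by (rule sum_mono)
  also have "\<dots> = r * sum w (Z - C)" by (simp add: sum_distrib_left)
  also have "\<dots> \<le> r * sum w (C - Z)"
    using wages split[of w] \<open>0 \<le> r\<close> by (intro mult_left_mono) auto
  also have "\<dots> = (\<Sum>c\<in>C - Z. r * w c)" by (simp add: sum_distrib_left)
  also have "\<dots> \<le> sum f (C - Z)" using above by (rule sum_mono)
  finally show ?thesis using split[of f] by linarith
qed

lemma budget_le_sum_wage_top_k: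
  fixes wage :: "'a \<Rightarrow> real"
  assumes R: "strict_total_on X R" and Y: "finite Y" "Y \<subseteq> X"
    and rejects: "top_k k R Y \<noteq> Y"
    and min_wage: "\<And>x. x \<in> X \<Longrightarrow> m \<le> wage x"
    and budget: "B \<le> real k * m"
  shows "B \<le> sum wage (top_k k R Y)"
proof -
  have "B \<le> real (card (top_k k R Y)) * m"
    using budget card_top_k_eq_if_rejects[OF R Y rejects] by simp
  also have "\<dots> = (\<Sum>c\<in>top_k k R Y. m)" by simp
  also have "\<dots> \<le> sum wage (top_k k R Y)"
    using min_wage Y(2) top_k_subset[of k R Y] by (intro sum_mono) blast
  finally show ?thesis .
qed

lemma top_k_ratio_threshold:
  fixes wage f :: "'a \<Rightarrow> real"
  assumes R: "strict_total_on X R" and Y: "finite Y" "Y \<subseteq> X"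
    and rejects: "top_k k R Y \<noteq> Y"
    and wage_pos: "\<And>x. x \<in> X \<Longrightarrow> 0 < wage x"
    and f_nonneg: "\<And>x. x \<in> X \<Longrightarrow> 0 \<le> f x"
    and ratio_mono: "\<And>x y. x \<in> X \<Longrightarrow> y \<in> X \<Longrightarrow> R x y \<Longrightarrow> f y / wage y \<le> f x / wage x"
  shows "\<exists>r\<ge>0. (\<forall>y\<in>Y - top_k k R Y. f y \<le> r * wage y) \<and> (\<forall>c\<in>top_k k R Y. r * wage c \<le> f c)"
proof -
  define C where "C = top_k k R Y"
  define ratio where "ratio y = f y / wage y" for y
  define r where "r = Max (ratio ` (Y - C))"
  have rejected: "finite (Y - C)" "Y - C \<noteq> {}"
    using Y rejects top_k_subset[of k R Y] unfolding C_def by auto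
  have ratio_le_r: "ratio y \<le> r" if "y \<in> Y - C" for y
    unfolding r_def using rejected that by simp
  have "r \<in> ratio ` (Y - C)"
    unfolding r_def using rejected by (intro Max_in) auto
  then obtain y0 where y0: "y0 \<in> Y - C" "ratio y0 = r" by auto
  show ?thesis
  proof (intro exI conjI ballI)
    show "0 \<le> r"
      using y0 Y(2) f_nonneg[of y0] wage_pos[of y0] unfolding ratio_def by auto
  next
    fix y assume "y \<in> Y - top_k k R Y"
    then have "y \<in> Y - C" "0 < wage y" using Y(2) wage_pos unfolding C_def by auto
    then show "f y \<le> r * wage y"
      using ratio_le_r[of y] unfolding ratio_def by (simp add: divide_le_eq)
  next
    fix c assume c: "c \<in> top_k k R Y"
    have "c \<in> X" using c Y(2) top_k_subset[of k R Y] by blast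
    have "R c y0"
      using top_k_before_rejected[OF R Y c] y0 unfolding C_def by blast
    then have "r \<le> ratio c"
      using ratio_mono[of c y0] \<open>c \<in> X\<close> y0 Y(2) unfolding ratio_def by auto
    with wage_pos[OF \<open>c \<in> X\<close>] show "r * wage c \<le> f c"
      unfolding ratio_def by (simp add: le_divide_eq)
  qed
qed

lemma top_k_COM:
  fixes wage f :: "'a \<Rightarrow> real"
  assumes X: "finite X" and R: "strict_total_on X R"
    and wage_pos: "\<And>x. x \<in> X \<Longrightarrow> 0 < wage x"
    and f_nonneg: "\<And>x. x \<in> X \<Longrightarrow> 0 \<le> f x"
    and ratio_mono: "\<And>x y. x \<in> X \<Longrightarrow> y \<in> X \<Longrightarrow> R x y \<Longrightarrow> f y / wage y \<le> f x / wage x"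
    and min_wage: "\<And>x. x \<in> X \<Longrightarrow> m \<le> wage x"
    and budget: "B \<le> real k * m"
  shows "COM X wage f B (top_k k R)"
  unfolding COM_def
proof (intro allI impI)
  fix Y Z assume YZ: "Z \<subseteq> Y \<and> Y \<subseteq> X \<and> sum wage Z \<le> max B (sum wage (top_k k R Y))"
  let ?C = "top_k k R Y"
  have Y: "finite Y" "Y \<subseteq> X" using YZ X finite_subset by auto
  have fin: "finite Z" "finite ?C"
    using YZ Y(1) top_k_subset[of k R Y] by (auto intro: finite_subset)
  show "sum f Z \<le> sum f ?C"
  proof (cases "?C = Y")
    case True
    have "sum f Z \<le> sum f Y"
      using Y(1) by (rule sum_mono2) (use YZ Y(2) f_nonneg in auto)
    with True show ?thesis by simp
  next
    case False
    have "B \<le> sum wage ?C"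
      using R Y False min_wage budget by (rule budget_le_sum_wage_top_k[of X R Y k m wage B])
    with YZ have wages: "sum wage Z \<le> sum wage ?C" by linarith
    have "\<exists>r\<ge>0. (\<forall>y\<in>Y - ?C. f y \<le> r * wage y) \<and> (\<forall>c\<in>?C. r * wage c \<le> f c)"
      using R Y False wage_pos f_nonneg ratio_mono by (rule top_k_ratio_threshold)
    then obtain r where r: "0 \<le> r"
      and below: "\<forall>y\<in>Y - ?C. f y \<le> r * wage y" and above: "\<forall>c\<in>?C. r * wage c \<le> f c"
      by blast
    show ?thesis
    proof (rule sum_le_sum_if_threshold[OF fin r _ _ wages])
      show "f y \<le> r * wage y" if "y \<in> Z - ?C" for y
        using that YZ below by blast
      show "r * wage c \<le> f c" if "c \<in> ?C - Z" for c
        using that above by blast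
    qed
  qed
qed

lemma budget_le_kh_mul_Min_wage:
  assumes "finite X" "X \<noteq> {}" "\<And>x. x \<in> X \<Longrightarrow> 0 < wage x"
  shows "B \<le> real (kh X wage B) * Min (wage ` X)"
proof -
  have "0 < Min (wage ` X)" using assms by simp
  moreover have "B / Min (wage ` X) \<le> real (kh X wage B)"
    unfolding kh_def by linarith
  ultimately show ?thesis by (simp add: divide_le_eq mult.commute)
qed

theorem lemma1:
  fixes X :: "'c set" and wage f :: "'c \<Rightarrow> real" and B :: real
    and tb :: "'c \<Rightarrow> 'c \<Rightarrow> bool"
  assumes fin: "finite X"
    and B_pos: "B > 0"
    and wage_pos: "\<And>x. x \<in> X \<Longrightarrow> 0 < wage x"
    and wage_le: "\<And>x. x \<in> X \<Longrightarrow> wage x \<le> B"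
    and f_pos: "\<And>x. x \<in> X \<Longrightarrow> 0 < f x"
    and tb_irrefl: "\<And>x. x \<in> X \<Longrightarrow> \<not> tb x x"
    and tb_trans: "\<And>x y z. x \<in> X \<Longrightarrow> y \<in> X \<Longrightarrow> z \<in> X \<Longrightarrow> tb x y \<Longrightarrow> tb y z \<Longrightarrow> tb x z"
    and tb_total: "\<And>x y. x \<in> X \<Longrightarrow> y \<in> X \<Longrightarrow> x \<noteq> y \<Longrightarrow> tb x y \<or> tb y x"
  defines "Ch \<equiv> greedy_ch (kh X wage B) wage f tb"
  shows "SUB X Ch \<and> IRC X Ch \<and> LAD X Ch \<and> COM X wage f B Ch"
proof -
  let ?R = "before wage f tb"
  have Ch: "Ch = top_k (kh X wage B) ?R"
    unfolding Ch_def greedy_ch_eq_top_k ..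
  have R: "strict_total_on X ?R"
    using tb_irrefl tb_trans tb_total by (rule strict_total_on_before)
  have COM: "COM X wage f B Ch"
  proof (cases "X = {}")
    case True
    then show ?thesis by (simp add: COM_def Ch top_k_def)
  next
    case False
    have f_nonneg: "0 \<le> f x" if "x \<in> X" for x
      using f_pos[OF that] by simp
    have ratio_mono: "f y / wage y \<le> f x / wage x" if "?R x y" for x y
      using that by (auto simp: before_def)
    have min_wage: "Min (wage ` X) \<le> wage x" if "x \<in> X" for x
      using fin that by simp
    show ?thesis
      unfolding Ch using fin R wage_pos f_nonneg ratio_mono min_wage
        budget_le_kh_mul_Min_wage[OF fin False wage_pos]
      by (rule top_k_COM)
  qed
  show ?thesis
    using top_k_SUB[OF fin] top_k_IRC[OF fin R] top_k_LAD[OF fin R] COM unfolding Ch by blast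
qed

end
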